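(* Let $S$ be as in the context. For every path $p$ from the root to a leaf in $\mathcal{T}(S)$ there is exactly one node $\phi$ on $p$ such that (1) $\phi$ has a unique Weiner link, (2) every ancestor of $\phi$ on $p$ has multiple Weiner links, and (3) every node in the subtree rooted at $\phi$ has a unique Weiner link.
   Context: $\Sigma$ is a finite totally ordered alphabet containing a symbol $\$$ smaller than every other symbol. $S$ is a string of length $n\ge 2$ over $\Sigma$ whose last character is $\$$ and in which $\$$ occurs nowhere else. The rotations of $S$ are the $n$ strings $S[i..n]S[1..i-1]$, $i\in[1,n]$. The rotation-trie $\mathcal{T}(S)$ is the trie of the set of rotations of $S$ (a rooted tree with single-character edge labels, children of a node having distinct labels, ordered by increasing label). The label $l(\phi)$ of a node is the concatenation of edge labels on the root-to-$\phi$ path; leaves are the $n$ nodes with $|l(\phi)|=n$. A triple $(\phi,\varphi,c)$ with $\phi,\varphi$ nodes and $c\in\Sigma$ is a Weiner link of $\phi$ if $l(\varphi)=c\,l(\phi)$, or $|l(\phi)|=n$ and $l(\varphi)=c\,l(\phi)[1..n-1]$. A node $\phi$ has a unique Weiner link if all of its Weiner links have the same target node $\varphi$ (every node has at least one Weiner link); otherwise $\phi$ has multiple Weiner links. *)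

theory Defs
  imports Main "HOL-Library.Sublist"
begin

text \<open>Strings are lists; positions are 0-indexed. The rotation S[i..n]S[1..i-1]
  (1-indexed, i in [1,n]) is drop i S @ take i S for i < n (0-indexed).\<close>

definition rotations :: "'a list \<Rightarrow> 'a list set" where
  "rotations S = {drop i S @ take i S | i. i < length S}"

text \<open>Nodes of the rotation trie are identified with their labels: the prefixes
  of rotations (the root is the empty string, leaves are the full rotations).\<close>

definition trie_nodes :: "'a list \<Rightarrow> 'a list set" where
  "trie_nodes S = {x. \<exists>r \<in> rotations S. prefix x r}"

definition weiner_link :: "'a set \<Rightarrow> 'a list \<Rightarrow> 'a list \<Rightarrow> 'a list \<Rightarrow> 'a \<Rightarrow> bool" where
  "weiner_link \<Sigma> S x y c \<longleftrightarrow>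
     x \<in> trie_nodes S \<and> y \<in> trie_nodes S \<and> c \<in> \<Sigma> \<and>
     (y = c # x \<or> (length x = length S \<and> y = c # butlast x))"

definition unique_weiner_link :: "'a set \<Rightarrow> 'a list \<Rightarrow> 'a list \<Rightarrow> bool" where
  "unique_weiner_link \<Sigma> S x \<longleftrightarrow>
     (\<forall>y c y' c'. weiner_link \<Sigma> S x y c \<and> weiner_link \<Sigma> S x y' c' \<longrightarrow> y = y')"

definition multiple_weiner_links :: "'a set \<Rightarrow> 'a list \<Rightarrow> 'a list \<Rightarrow> bool" where
  "multiple_weiner_links \<Sigma> S x \<longleftrightarrow> \<not> unique_weiner_link \<Sigma> S x"

end

theory Submission
  imports Defs "HOL-Library.Multiset"
begin

text \<open>Having a unique Weiner link is inherited by descendants: a link of \<open>z\<close> with label \<open>c\<close>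
  restricts to the link \<open>(x, c x, c)\<close> of every proper ancestor \<open>x\<close>, so distinct targets at \<open>z\<close>
  come from distinct labels, which already give distinct targets at \<open>x\<close>. Every leaf has a unique
  Weiner link, because its link targets are rotations, which all have the multiset of letters
  of \<open>S\<close>; this pins down the label. Hence along a root-to-leaf path the nodes with a unique
  Weiner link form a nonempty final segment, and the node asked for is its first element.\<close>

lemma ex1_minimal_prefix:
  assumes "P r"
  shows "\<exists>!x. prefix x r \<and> P x \<and> (\<forall>y. strict_prefix y x \<longrightarrow> \<not> P y)"
proof -
  define k where "k = (LEAST k. P (take k r))"
  have Pk: "P (take k r)"
    unfolding k_def by (rule LeastI[of _ "length r"]) (simp add: assms)
  have below: "\<not> P (take j r)" if "j < k" for j
    using that unfolding k_def by (rule not_less_Least)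
  have minimal: "\<not> P y" if "strict_prefix y (take k r)" for y
  proof -
    have "prefix y r" "length y < length (take k r)"
      using that take_is_prefix prefix_order.less_le_trans prefix_order.less_imp_le
        prefix_length_less by blast+
    then have "y = take (length y) r" "length y < k"
      by (auto simp: prefix_def)
    then show ?thesis using below by metis
  qed
  show ?thesis
  proof (rule ex1I[of _ "take k r"])
    show "prefix (take k r) r \<and> P (take k r) \<and> (\<forall>y. strict_prefix y (take k r) \<longrightarrow> \<not> P y)"
      using Pk minimal take_is_prefix by blast
  next
    fix x assume x: "prefix x r \<and> P x \<and> (\<forall>y. strict_prefix y x \<longrightarrow> \<not> P y)"
    have "prefix x (take k r) \<or> prefix (take k r) x"
      using x take_is_prefix prefix_same_cases by blast
    then show "x = take k r"
      using x Pk minimal by (metis prefix_order.le_imp_less_or_eq)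
  qed
qed

lemma length_rotation: "r \<in> rotations S \<Longrightarrow> length r = length S"
  unfolding rotations_def by auto

lemma mset_rotation: "r \<in> rotations S \<Longrightarrow> mset r = mset S"
  unfolding rotations_def
  by (auto, metis append_take_drop_id mset_append union_commute)

lemma trie_node_length_le: "x \<in> trie_nodes S \<Longrightarrow> length x \<le> length S"
  unfolding trie_nodes_def using length_rotation prefix_length_le by fastforce

lemma trie_nodes_prefix_closed: "x \<in> trie_nodes S \<Longrightarrow> prefix w x \<Longrightarrow> w \<in> trie_nodes S"
  unfolding trie_nodes_def using prefix_order.trans by blast

lemma trie_leaf_rotation:
  assumes "x \<in> trie_nodes S" and "length x = length S"
  shows "x \<in> rotations S"
proof -
  obtain r where r: "r \<in> rotations S" "prefix x r"
    using assms(1) unfolding trie_nodes_def by auto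
  moreover have "length r = length x"
    using r(1) assms(2) length_rotation by simp
  ultimately have "r = x"
    by (metis prefix_length_le prefix_order.eq_iff prefix_length_prefix)
  then show ?thesis using r by simp
qed

lemma weiner_link_target:
  "weiner_link \<Sigma> S z y c \<Longrightarrow> y = (if length z = length S then c # butlast z else c # z)"
  unfolding weiner_link_def using trie_node_length_le[of y S] by auto

lemma weiner_link_strict_prefix:
  assumes link: "weiner_link \<Sigma> S z y c" and "strict_prefix x z"
  shows "weiner_link \<Sigma> S x (c # x) c"
proof -
  have nodes: "z \<in> trie_nodes S" "y \<in> trie_nodes S" "c \<in> \<Sigma>"
    using link unfolding weiner_link_def by auto
  have "prefix x (butlast z)"
    using \<open>strict_prefix x z\<close> by (auto simp: strict_prefix_def prefix_def butlast_append)
  then have "prefix (c # x) y"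
    using weiner_link_target[OF link] \<open>strict_prefix x z\<close>
    by (auto simp: prefix_order.less_imp_le)
  then have "c # x \<in> trie_nodes S"
    using nodes trie_nodes_prefix_closed by blast
  moreover have "x \<in> trie_nodes S"
    using nodes \<open>strict_prefix x z\<close> trie_nodes_prefix_closed prefix_order.less_imp_le by blast
  ultimately show ?thesis
    using nodes unfolding weiner_link_def by auto
qed

lemma unique_weiner_link_prefix_mono:
  assumes unique: "unique_weiner_link \<Sigma> S x" and "prefix x z"
  shows "unique_weiner_link \<Sigma> S z"
proof (cases "x = z")
  case True
  then show ?thesis using unique by simp
next
  case False
  then have sp: "strict_prefix x z" using \<open>prefix x z\<close> by (simp add: strict_prefix_def)
  show ?thesis unfolding unique_weiner_link_def
  proof (intro allI impI, elim conjE)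
    fix y c y' c'
    assume l: "weiner_link \<Sigma> S z y c" and l': "weiner_link \<Sigma> S z y' c'"
    have "c # x = c' # x"
      using unique weiner_link_strict_prefix[OF l sp] weiner_link_strict_prefix[OF l' sp]
      unfolding unique_weiner_link_def by blast
    then show "y = y'"
      using weiner_link_target[OF l] weiner_link_target[OF l'] by simp
  qed
qed

lemma unique_weiner_link_rotation:
  assumes r: "r \<in> rotations S"
  shows "unique_weiner_link \<Sigma> S r"
  unfolding unique_weiner_link_def
proof (intro allI impI, elim conjE)
  fix y c y' c'
  assume l: "weiner_link \<Sigma> S r y c" and l': "weiner_link \<Sigma> S r y' c'"
  have len: "length r = length S" using length_rotation r by blast
  have y: "y = c # butlast r" and y': "y' = c' # butlast r"
    using weiner_link_target[OF l] weiner_link_target[OF l'] len by auto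
  have "length y = length S" "length y' = length S"
    using y y' len r by (auto simp: rotations_def)
  then have "y \<in> rotations S" "y' \<in> rotations S"
    using l l' trie_leaf_rotation unfolding weiner_link_def by blast+
  then have "mset y = mset y'"
    using mset_rotation by metis
  then have "add_mset c (mset (butlast r)) = add_mset c' (mset (butlast r))"
    using y y' by simp
  then have "c = c'"
    by (auto dest: arg_cong[where f = "\<lambda>M. count M c"] split: if_splits)
  then show "y = y'" using y y' by simp
qed

theorem mainTheorem4:
  fixes \<Sigma> :: "'a::linorder set" and dollar :: 'a and S :: "'a list"
  assumes "finite \<Sigma>" and "dollar \<in> \<Sigma>"
    and "\<forall>c\<in>\<Sigma>. c \<noteq> dollar \<longrightarrow> dollar < c"
    and "set S \<subseteq> \<Sigma>" and "length S \<ge> 2"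
    and "last S = dollar" and "dollar \<notin> set (butlast S)"
  shows "\<forall>r \<in> rotations S. \<exists>!x. prefix x r
           \<and> unique_weiner_link \<Sigma> S x
           \<and> (\<forall>y. strict_prefix y x \<longrightarrow> multiple_weiner_links \<Sigma> S y)
           \<and> (\<forall>z \<in> trie_nodes S. prefix x z \<longrightarrow> unique_weiner_link \<Sigma> S z)"
proof
  fix r assume "r \<in> rotations S"
  then have "\<exists>!x. prefix x r \<and> unique_weiner_link \<Sigma> S x
               \<and> (\<forall>y. strict_prefix y x \<longrightarrow> \<not> unique_weiner_link \<Sigma> S y)"
    by (intro ex1_minimal_prefix unique_weiner_link_rotation)
  moreover have equiv: "(\<forall>y. strict_prefix y x \<longrightarrow> multiple_weiner_links \<Sigma> S y)
      \<and> (\<forall>z \<in> trie_nodes S. prefix x z \<longrightarrow> unique_weiner_link \<Sigma> S z)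
      \<longleftrightarrow> (\<forall>y. strict_prefix y x \<longrightarrow> \<not> unique_weiner_link \<Sigma> S y)"
    if "unique_weiner_link \<Sigma> S x" for x
    using that unique_weiner_link_prefix_mono unfolding multiple_weiner_links_def by blast
  ultimately show "\<exists>!x. prefix x r
           \<and> unique_weiner_link \<Sigma> S x
           \<and> (\<forall>y. strict_prefix y x \<longrightarrow> multiple_weiner_links \<Sigma> S y)
           \<and> (\<forall>z \<in> trie_nodes S. prefix x z \<longrightarrow> unique_weiner_link \<Sigma> S z)"
    by (simp add: equiv cong: conj_cong)
qed

end
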